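(* Let $\alpha,\beta,\gamma,\delta\in\mathbb{R}$ with $\alpha+\delta\neq 0$ and $\alpha\gamma=0$, and let $G_7$ be the connected, simply connected Lie group whose Lie algebra $\mathfrak{g}_7$ has a basis $\{e_1,e_2,e_3\}$ with $[e_1,e_2]=-\alpha e_1-\beta e_2-\beta e_3$, $[e_1,e_3]=\alpha e_1+\beta e_2+\beta e_3$, $[e_2,e_3]=\gamma e_1+\delta e_2+\delta e_3$, equipped with the left-invariant Lorentzian metric $g$ for which $\{e_1,e_2,e_3\}$ is pseudo-orthonormal with $e_3$ timelike, and with the product structure $J$. Let $\lambda_0,c\in\mathbb{R}$. Then there exists a derivation $D$ of $\mathfrak{g}_7$ with $\widetilde{\mathrm{Ric}}^1=(s^1\lambda_0+c)\mathrm{Id}+D$ (i.e. $(G_7,g,J)$ is an algebraic Schouten soliton associated to the Kobayashi–Nomizu connection $\nabla^1$) if and only if $\alpha\neq0$, $\beta=\gamma=0$, $\delta=\frac12\alpha$ and $c=-\frac12\alpha^2+2\alpha^2\lambda_0$.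
   Context: Pseudo-orthonormal means $g(e_1,e_1)=g(e_2,e_2)=1$, $g(e_3,e_3)=-1$, $g(e_i,e_j)=0$ for $i\neq j$; left-invariant tensors are identified with their values on $\mathfrak{g}$. $\nabla$ is the Levi-Civita connection of $g$. The product structure $J$ is the left-invariant endomorphism with $Je_1=e_1$, $Je_2=e_2$, $Je_3=-e_3$. The canonical connection is $\nabla^0_XY=\nabla_XY-\frac12(\nabla_XJ)JY$, and the Kobayashi–Nomizu connection is $\nabla^1_XY=\nabla^0_XY-\frac14[(\nabla_YJ)JX-(\nabla_{JY}J)X]$. For $k=0,1$: $R^k(X,Y)Z=\nabla^k_X\nabla^k_YZ-\nabla^k_Y\nabla^k_XZ-\nabla^k_{[X,Y]}Z$; $\rho^k(X,Y)=-g(R^k(X,e_1)Y,e_1)-g(R^k(X,e_2)Y,e_2)+g(R^k(X,e_3)Y,e_3)$; $\widetilde\rho^k(X,Y)=\frac12(\rho^k(X,Y)+\rho^k(Y,X))$; $\widetilde{\mathrm{Ric}}^k$ is defined by $\widetilde\rho^k(X,Y)=g(\widetilde{\mathrm{Ric}}^k(X),Y)$; and $s^k=\widetilde\rho^k(e_1,e_1)+\widetilde\rho^k(e_2,e_2)-\widetilde\rho^k(e_3,e_3)$. A derivation of $\mathfrak{g}$ is a linear map $D$ with $D[X,Y]=[DX,Y]+[X,DY]$. $(G,g,J)$ is an algebraic Schouten soliton associated to $\nabla^k$ (with real constants $\lambda_0,c$) if $\widetilde{\mathrm{Ric}}^k=(s^k\lambda_0+c)\mathrm{Id}+D$ for some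 derivation $D$. *)

theory Defs
  imports "HOL-Analysis.Analysis"
begin

text \<open>Left-invariant objects on a 3-dimensional Lie group are identified with their
values on the Lie algebra, modelled as real^3 with basis e 1, e 2, e 3
(coordinates with respect to this basis).\<close>

type_synonym vec3 = "real^3"

definition e :: "3 \<Rightarrow> vec3" where
  "e k = axis k 1"

text \<open>signature (1,1,-1): g(e_k,e_k) = eps k\<close>
definition eps :: "3 \<Rightarrow> real" where
  "eps k = (if k = 3 then -1 else 1)"

definition gL :: "vec3 \<Rightarrow> vec3 \<Rightarrow> real" where
  "gL X Y = X$1 * Y$1 + X$2 * Y$2 - X$3 * Y$3"

text \<open>the vector V with g(V, e_k) = phi(e_k) for all k (index raising)\<close>
definition raise :: "(vec3 \<Rightarrow> real) \<Rightarrow> vec3" where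
  "raise \<phi> = (\<chi> k. eps k * \<phi> (e k))"

text \<open>Levi-Civita connection of a left-invariant metric, via the Koszul formula
  2 g(nabla_X Y, Z) = g([X,Y],Z) - g([Y,Z],X) + g([Z,X],Y)\<close>
definition LC :: "(vec3 \<Rightarrow> vec3 \<Rightarrow> vec3) \<Rightarrow> vec3 \<Rightarrow> vec3 \<Rightarrow> vec3" where
  "LC br X Y = raise (\<lambda>Z. (1/2) * (gL (br X Y) Z - gL (br Y Z) X + gL (br Z X) Y))"

definition Jp :: "vec3 \<Rightarrow> vec3" where
  "Jp X = (\<chi> k. eps k * X$k)"

definition nablaJ :: "(vec3 \<Rightarrow> vec3 \<Rightarrow> vec3) \<Rightarrow> vec3 \<Rightarrow> vec3 \<Rightarrow> vec3" where
  "nablaJ br X Y = LC br X (Jp Y) - Jp (LC br X Y)"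

definition nabla0 :: "(vec3 \<Rightarrow> vec3 \<Rightarrow> vec3) \<Rightarrow> vec3 \<Rightarrow> vec3 \<Rightarrow> vec3" where
  "nabla0 br X Y = LC br X Y - (1/2) *\<^sub>R nablaJ br X (Jp Y)"

definition nabla1 :: "(vec3 \<Rightarrow> vec3 \<Rightarrow> vec3) \<Rightarrow> vec3 \<Rightarrow> vec3 \<Rightarrow> vec3" where
  "nabla1 br X Y = nabla0 br X Y
      - (1/4) *\<^sub>R (nablaJ br Y (Jp X) - nablaJ br (Jp Y) X)"

definition curv :: "(vec3 \<Rightarrow> vec3 \<Rightarrow> vec3) \<Rightarrow> (vec3 \<Rightarrow> vec3 \<Rightarrow> vec3)
    \<Rightarrow> vec3 \<Rightarrow> vec3 \<Rightarrow> vec3 \<Rightarrow> vec3" where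
  "curv br nb X Y Z = nb X (nb Y Z) - nb Y (nb X Z) - nb (br X Y) Z"

definition ricci :: "(vec3 \<Rightarrow> vec3 \<Rightarrow> vec3) \<Rightarrow> (vec3 \<Rightarrow> vec3 \<Rightarrow> vec3)
    \<Rightarrow> vec3 \<Rightarrow> vec3 \<Rightarrow> real" where
  "ricci br nb X Y = - gL (curv br nb X (e 1) Y) (e 1) - gL (curv br nb X (e 2) Y) (e 2)
       + gL (curv br nb X (e 3) Y) (e 3)"

definition sym_ricci :: "(vec3 \<Rightarrow> vec3 \<Rightarrow> vec3) \<Rightarrow> (vec3 \<Rightarrow> vec3 \<Rightarrow> vec3)
    \<Rightarrow> vec3 \<Rightarrow> vec3 \<Rightarrow> real" where
  "sym_ricci br nb X Y = (1/2) * (ricci br nb X Y + ricci br nb Y X)"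

definition Ric_op :: "(vec3 \<Rightarrow> vec3 \<Rightarrow> vec3) \<Rightarrow> (vec3 \<Rightarrow> vec3 \<Rightarrow> vec3)
    \<Rightarrow> vec3 \<Rightarrow> vec3" where
  "Ric_op br nb X = raise (\<lambda>Y. sym_ricci br nb X Y)"

definition scal :: "(vec3 \<Rightarrow> vec3 \<Rightarrow> vec3) \<Rightarrow> (vec3 \<Rightarrow> vec3 \<Rightarrow> vec3) \<Rightarrow> real" where
  "scal br nb = sym_ricci br nb (e 1) (e 1) + sym_ricci br nb (e 2) (e 2)
       - sym_ricci br nb (e 3) (e 3)"

definition derivation :: "(vec3 \<Rightarrow> vec3 \<Rightarrow> vec3) \<Rightarrow> (vec3 \<Rightarrow> vec3) \<Rightarrow> bool" where
  "derivation br D \<longleftrightarrow> linear D \<and> (\<forall>X Y. D (br X Y) = br (D X) Y + br X (D Y))"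

definition alg_schouten_soliton :: "(vec3 \<Rightarrow> vec3 \<Rightarrow> vec3) \<Rightarrow> (vec3 \<Rightarrow> vec3 \<Rightarrow> vec3)
    \<Rightarrow> real \<Rightarrow> real \<Rightarrow> bool" where
  "alg_schouten_soliton br nb lam0 c \<longleftrightarrow>
     (\<exists>D. derivation br D \<and> (\<forall>X. Ric_op br nb X = (scal br nb * lam0 + c) *\<^sub>R X + D X))"

definition bracket_of :: "vec3 \<Rightarrow> vec3 \<Rightarrow> vec3 \<Rightarrow> vec3 \<Rightarrow> vec3 \<Rightarrow> vec3" where
  "bracket_of b12 b13 b23 X Y =
     (X$1 * Y$2 - X$2 * Y$1) *\<^sub>R b12 + (X$1 * Y$3 - X$3 * Y$1) *\<^sub>R b13
     + (X$2 * Y$3 - X$3 * Y$2) *\<^sub>R b23"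

definition br7 :: "real \<Rightarrow> real \<Rightarrow> real \<Rightarrow> real \<Rightarrow> vec3 \<Rightarrow> vec3 \<Rightarrow> vec3" where
  "br7 \<alpha> \<beta> \<gamma> \<delta> = bracket_of
      ((-\<alpha>) *\<^sub>R e 1 + (-\<beta>) *\<^sub>R e 2 + (-\<beta>) *\<^sub>R e 3)
      (\<alpha> *\<^sub>R e 1 + \<beta> *\<^sub>R e 2 + \<beta> *\<^sub>R e 3)
      (\<gamma> *\<^sub>R e 1 + \<delta> *\<^sub>R e 2 + \<delta> *\<^sub>R e 3)"

lemma e_distinct: "e 1 \<noteq> e 2" "e 1 \<noteq> e 3" "e 2 \<noteq> e 3"
  by (auto simp: e_def axis_eq_axis)

end

theory Submission imports Defs begin

(* Since D is determined by the soliton equation, the condition says that the shifted Ricci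
  operator Ric - k Id, k = s lam0 + c, is a derivation of g_7.  For nabla^1 the Ricci operator
  is computed explicitly, and the Leibniz rule on the pairs (e_i, e_j) yields polynomial
  equations in alpha, beta, gamma, delta, k.  Three of them are multiples of beta and, for
  beta \<noteq> 0, force beta^2 + 10 delta^2 = 0.  With beta = 0 the others read alpha P = delta P = 0
  and alpha Q = delta Q = 0 for P = k + delta^2 + alpha delta/2, Q = delta^2 + alpha delta/2 -
  alpha^2 - k, so alpha + delta \<noteq> 0 gives P = Q = 0, i.e. delta = alpha/2 and k = -alpha^2/2;
  gamma enters only through alpha gamma = 0. *)

lemma e_nth:
  "e 1 $ 1 = 1" "e 1 $ 2 = 0" "e 1 $ 3 = 0"
  "e 2 $ 1 = 0" "e 2 $ 2 = 1" "e 2 $ 3 = 0"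
  "e 3 $ 1 = 0" "e 3 $ 2 = 0" "e 3 $ 3 = 1"
  by (simp_all add: e_def axis_def)

lemma bracket_of_nth:
  "bracket_of b12 b13 b23 X Y $ i
     = (X$1*Y$2 - X$2*Y$1) * b12$i + (X$1*Y$3 - X$3*Y$1) * b13$i + (X$2*Y$3 - X$3*Y$2) * b23$i"
  by (simp add: bracket_of_def)

lemma br7_nth:
  fixes a b g d :: real
  shows "br7 a b g d X Y $ 1 = -a*(X$1*Y$2 - X$2*Y$1) + a*(X$1*Y$3 - X$3*Y$1) + g*(X$2*Y$3 - X$3*Y$2)"
    and "br7 a b g d X Y $ 2 = -b*(X$1*Y$2 - X$2*Y$1) + b*(X$1*Y$3 - X$3*Y$1) + d*(X$2*Y$3 - X$3*Y$2)"
    and "br7 a b g d X Y $ 3 = -b*(X$1*Y$2 - X$2*Y$1) + b*(X$1*Y$3 - X$3*Y$1) + d*(X$2*Y$3 - X$3*Y$2)"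
  by (simp_all add: br7_def bracket_of_nth e_nth algebra_simps)

lemma nabla1_br7_nth:
  fixes a b g d :: real
  shows "nabla1 (br7 a b g d) X Y $ 1 = - a*X$1*Y$2 - b*X$2*Y$2 - a*X$3*Y$1 - g*X$3*Y$2"
    and "nabla1 (br7 a b g d) X Y $ 2 = a*X$1*Y$1 + b*X$2*Y$1 - b*X$3*Y$1 - d*X$3*Y$2"
    and "nabla1 (br7 a b g d) X Y $ 3 = b*X$1*Y$3 + d*X$2*Y$3"
  by (simp_all add: nabla1_def nabla0_def nablaJ_def LC_def raise_def Jp_def gL_def br7_def
      bracket_of_def e_def axis_def eps_def algebra_simps)

lemma Ric_op_br7_nth:
  fixes a b g d :: real
  shows "Ric_op (br7 a b g d) (nabla1 (br7 a b g d)) X $ 1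
           = -(a^2) * X$1 + (b*d/2 - a*b/2) * X$2 + (b*d + a*b) * X$3"
    and "Ric_op (br7 a b g d) (nabla1 (br7 a b g d)) X $ 2
           = (b*d/2 - a*b/2) * X$1 + (-b*g - b^2 - a^2) * X$2 + (d^2 + b*g/2 + a*d/2) * X$3"
    and "Ric_op (br7 a b g d) (nabla1 (br7 a b g d)) X $ 3
           = (-b*d - a*b) * X$1 + (-(d^2) - b*g/2 - a*d/2) * X$2"
  by (simp_all add: Ric_op_def raise_def sym_ricci_def ricci_def curv_def gL_def
      nabla1_br7_nth br7_nth e_nth eps_def;
      simp add: algebra_simps power2_eq_square)+

lemma scal_br7:
  fixes a b g d :: real
  shows "scal (br7 a b g d) (nabla1 (br7 a b g d)) = -b*g - b^2 - 2*a^2"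
proof -
  have "scal (br7 a b g d) (nabla1 (br7 a b g d))
      = Ric_op (br7 a b g d) (nabla1 (br7 a b g d)) (e 1) $ 1
      + Ric_op (br7 a b g d) (nabla1 (br7 a b g d)) (e 2) $ 2
      + Ric_op (br7 a b g d) (nabla1 (br7 a b g d)) (e 3) $ 3"
    by (simp add: scal_def Ric_op_def raise_def eps_def)
  then show ?thesis
    by (simp add: Ric_op_br7_nth e_nth)
qed

lemma alg_schouten_soliton_iff_derivation:
  "alg_schouten_soliton br nb lam0 c
     \<longleftrightarrow> derivation br (\<lambda>X. Ric_op br nb X - (scal br nb * lam0 + c) *\<^sub>R X)"
proof -
  have "(\<forall>X. Ric_op br nb X = (scal br nb * lam0 + c) *\<^sub>R X + D X)
      \<longleftrightarrow> D = (\<lambda>X. Ric_op br nb X - (scal br nb * lam0 + c) *\<^sub>R X)" for D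
    by (auto simp: fun_eq_iff algebra_simps)
  then show ?thesis
    unfolding alg_schouten_soliton_def by simp
qed

lemma soliton_system_beta_eq_0:
  fixes a b d k :: real
  assumes "a + d \<noteq> 0"
    and "b * (k + d^2 + 3/2*a*d + 1/2*a^2) = 0"
    and "b * (k - 1/2*d^2 - 1/2*a*d) = 0"
    and "b * (k - d^2 + b^2 - a*d + a^2) = 0"
  shows "b = 0"
proof (rule ccontr)
  assume "b \<noteq> 0"
  with assms(2-4) have "k + d^2 + 3/2*a*d + 1/2*a^2 = 0"
    and "k - 1/2*d^2 - 1/2*a*d = 0"
    and "k - d^2 + b^2 - a*d + a^2 = 0"
    by (metis mult_eq_0_iff)+
  then have k1: "k = -(d^2) - 3/2*a*d - 1/2*a^2"
    and k2: "k = 1/2*d^2 + 1/2*a*d"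
    and k3: "k = d^2 - b^2 + a*d - a^2"
    by linarith+
  from k1 k2 have "(3*d + a) * (d + a) = 0"
    by (simp add: algebra_simps power2_eq_square)
  with assms(1) have "a = -3*d"
    by (simp add: add.commute add_eq_0_iff)
  with k2 k3 have "b^2 + 10 * d^2 = 0"
    by (simp add: algebra_simps power2_eq_square)
  then have "b^2 = 0"
    using zero_le_power2[of b] zero_le_power2[of d] by linarith
  with \<open>b \<noteq> 0\<close> show False
    by simp
qed

lemma soliton_system_solution:
  fixes a d k :: real
  assumes "a + d \<noteq> 0"
    and "a * (k + d^2 + a*d/2) = 0" and "d * (k + d^2 + a*d/2) = 0"
    and "a * (d^2 + a*d/2 - a^2 - k) = 0" and "d * (d^2 + a*d/2 - a^2 - k) = 0"
  shows "a \<noteq> 0 \<and> d = a/2 \<and> k = -(a^2)/2"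
proof -
  have "(a + d) * (k + d^2 + a*d/2) = 0" and "(a + d) * (d^2 + a*d/2 - a^2 - k) = 0"
    using assms(2-5) by (simp_all only: distrib_right)
  with assms(1) have k1: "k = -(d^2) - a*d/2" and k2: "k = d^2 + a*d/2 - a^2"
    by simp_all
  then have "(2*d - a) * (d + a) = 0"
    by (simp add: algebra_simps power2_eq_square)
  with assms(1) have "d = a/2"
    by (simp add: add.commute)
  moreover from this assms(1) have "a \<noteq> 0"
    by auto
  moreover from k1 \<open>d = a/2\<close> have "k = -(a^2)/2"
    by (simp add: power2_eq_square field_simps)
  ultimately show ?thesis
    by blast
qed

lemma derivation_Ric_shift_br7_imp:
  fixes a b g d k :: real
  assumes "a + d \<noteq> 0"
    and "derivation (br7 a b g d) (\<lambda>X. Ric_op (br7 a b g d) (nabla1 (br7 a b g d)) X - k *\<^sub>R X)"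
  shows "a \<noteq> 0 \<and> b = 0 \<and> d = a/2 \<and> k = -(a^2)/2"
proof -
  define R where "R = Ric_op (br7 a b g d) (nabla1 (br7 a b g d))"
  have leibniz: "\<And>X Y i. (R (br7 a b g d X Y) - k *\<^sub>R br7 a b g d X Y) $ i
      = (br7 a b g d (R X - k *\<^sub>R X) Y + br7 a b g d X (R Y - k *\<^sub>R Y)) $ i"
    using assms(2) by (simp add: derivation_def R_def)
  note components = Ric_op_br7_nth[of a b g d, folded R_def] br7_nth e_nth
    algebra_simps power2_eq_square power3_eq_cube
  have "b * (k + d^2 + 3/2*a*d + 1/2*a^2) = 0"
    using leibniz[of "e 1" "e 2" 2] by (simp add: components)
  moreover have "b * (k - 1/2*d^2 - 1/2*a*d) = 0"
    using leibniz[of "e 1" "e 3" 3] by (simp add: components)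
  moreover have "b * (k - d^2 + b^2 - a*d + a^2) = 0"
    using leibniz[of "e 1" "e 2" 3] by (simp add: components)
  ultimately have "b = 0"
    by (rule soliton_system_beta_eq_0[OF assms(1)])
  have "a * (k + d^2 + a*d/2) = 0"
    using leibniz[of "e 1" "e 3" 1] \<open>b = 0\<close> by (simp add: components)
  moreover have "d * (k + d^2 + a*d/2) = 0"
    using leibniz[of "e 2" "e 3" 2] \<open>b = 0\<close> by (simp add: components)
  moreover have "a * (d^2 + a*d/2 - a^2 - k) = 0"
    using leibniz[of "e 1" "e 2" 1] \<open>b = 0\<close> by (simp add: components)
  moreover have "d * (d^2 + a*d/2 - a^2 - k) = 0"
    using leibniz[of "e 2" "e 3" 3] \<open>b = 0\<close> by (simp add: components)
  ultimately show ?thesis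
    using assms(1) \<open>b = 0\<close> soliton_system_solution by blast
qed

lemma derivation_Ric_shift_br7:
  fixes a :: real
  defines "br \<equiv> br7 a 0 0 (a/2)"
  shows "derivation br (\<lambda>X. Ric_op br (nabla1 br) X + (a^2/2) *\<^sub>R X)"
  unfolding derivation_def
proof
  show "linear (\<lambda>X. Ric_op br (nabla1 br) X + (a^2/2) *\<^sub>R X)"
    by (intro linearI) (simp_all add: br_def vec_eq_iff forall_3 Ric_op_br7_nth algebra_simps)
  show "\<forall>X Y. Ric_op br (nabla1 br) (br X Y) + (a^2/2) *\<^sub>R br X Y
      = br (Ric_op br (nabla1 br) X + (a^2/2) *\<^sub>R X) Y + br X (Ric_op br (nabla1 br) Y + (a^2/2) *\<^sub>R Y)"
    by (simp add: br_def vec_eq_iff forall_3 Ric_op_br7_nth br7_nth field_simps power2_eq_square)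
qed

lemma derivation_Ric_shift_br7_iff:
  fixes a b g d k :: real
  assumes "a + d \<noteq> 0" and "a * g = 0"
  shows "derivation (br7 a b g d) (\<lambda>X. Ric_op (br7 a b g d) (nabla1 (br7 a b g d)) X - k *\<^sub>R X)
     \<longleftrightarrow> a \<noteq> 0 \<and> b = 0 \<and> g = 0 \<and> d = a/2 \<and> k = -(a^2)/2"
proof
  assume "derivation (br7 a b g d) (\<lambda>X. Ric_op (br7 a b g d) (nabla1 (br7 a b g d)) X - k *\<^sub>R X)"
  with assms(1) have "a \<noteq> 0 \<and> b = 0 \<and> d = a/2 \<and> k = -(a^2)/2"
    by (rule derivation_Ric_shift_br7_imp)
  with assms(2) show "a \<noteq> 0 \<and> b = 0 \<and> g = 0 \<and> d = a/2 \<and> k = -(a^2)/2"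
    by simp
next
  assume "a \<noteq> 0 \<and> b = 0 \<and> g = 0 \<and> d = a/2 \<and> k = -(a^2)/2"
  then have "b = 0" "g = 0" "d = a/2" "- k = a^2/2"
    by simp_all
  with derivation_Ric_shift_br7[of a]
  show "derivation (br7 a b g d) (\<lambda>X. Ric_op (br7 a b g d) (nabla1 (br7 a b g d)) X - k *\<^sub>R X)"
    by (simp only: diff_conv_add_uminus scaleR_minus_left[symmetric])
qed

theorem theorem4p15:
  fixes \<alpha> \<beta> \<gamma> \<delta> lam0 c :: real
  assumes "\<alpha> + \<delta> \<noteq> 0" and "\<alpha> * \<gamma> = 0"
  shows "alg_schouten_soliton (br7 \<alpha> \<beta> \<gamma> \<delta>) (nabla1 (br7 \<alpha> \<beta> \<gamma> \<delta>)) lam0 c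
     \<longleftrightarrow> (\<alpha> \<noteq> 0 \<and> \<beta> = 0 \<and> \<gamma> = 0 \<and> \<delta> = \<alpha> / 2 \<and> c = - (1/2) * \<alpha>^2 + 2 * \<alpha>^2 * lam0)"
proof -
  let ?br = "br7 \<alpha> \<beta> \<gamma> \<delta>"
  let ?k = "scal ?br (nabla1 ?br) * lam0 + c"
  have k_eq: "?k = -(\<alpha>^2)/2 \<longleftrightarrow> c = - (1/2) * \<alpha>^2 + 2 * \<alpha>^2 * lam0"
    if "\<beta> = 0" "\<gamma> = 0"
    using that by (simp add: scal_br7) linarith
  have "alg_schouten_soliton ?br (nabla1 ?br) lam0 c
      \<longleftrightarrow> derivation ?br (\<lambda>X. Ric_op ?br (nabla1 ?br) X - ?k *\<^sub>R X)"
    by (rule alg_schouten_soliton_iff_derivation)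
  also have "\<dots> \<longleftrightarrow> \<alpha> \<noteq> 0 \<and> \<beta> = 0 \<and> \<gamma> = 0 \<and> \<delta> = \<alpha>/2 \<and> ?k = -(\<alpha>^2)/2"
    using assms by (rule derivation_Ric_shift_br7_iff)
  also have "\<dots> \<longleftrightarrow> \<alpha> \<noteq> 0 \<and> \<beta> = 0 \<and> \<gamma> = 0 \<and> \<delta> = \<alpha> / 2 \<and> c = - (1/2) * \<alpha>^2 + 2 * \<alpha>^2 * lam0"
    using k_eq by blast
  finally show ?thesis .
qed

end
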